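(* Let $\mathbf v=(v_1,\dots,v_m)$ and $\mathbf k=(k_1,\dots,k_m)$ be $m$-tuples of positive integers with $k_i\le v_i$ for all $i$, and put $v=\sum_i v_i$, $k=\sum_i k_i$, assuming $k\ge 2$. Then \[ C(\mathbf v,\mathbf k,2)\ \ge\ \left\lceil \frac{\binom{v}{2}-\sum_{i:\,k_i=1}\binom{v_i}{2}}{\binom{k}{2}}\right\rceil=\left\lceil \frac{\sum_{i:\,k_i\neq 1}\binom{v_i}{2}+\sum_{1\le i<j\le m}v_iv_j}{\binom{k}{2}}\right\rceil, \] with the convention $\binom{1}{2}=0$.
   Context: Let $X_1,\dots,X_m$ be pairwise disjoint sets with $|X_i|=v_i$. A block is an $m$-tuple of sets $(B_1,\dots,B_m)$ with $B_i\subseteq X_i$, $|B_i|=k_i$. An $m$-tuple of sets $(T_1,\dots,T_m)$ is $(\mathbf v,\mathbf k,2)$-admissible if $T_i\subseteq X_i$, $|T_i|\le k_i$ for all $i$ and $\sum_i|T_i|=2$; it is contained in a block if $T_i\subseteq B_i$ for all $i$. A ${\rm GC}(\mathbf v,\mathbf k,2)$ is a finite family (repetitions allowed) of blocks such that every admissible tuple is contained in at least one block; $C(\mathbf v,\mathbf k,2)$ is the minimum number of blocks of such a family. *)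

theory Defs
  imports Complex_Main
begin

text \<open>Parts are indexed by i < m; ground sets X i; tuples of sets are functions nat => 'a set
  (only the components i < m are relevant).\<close>

definition is_block :: "nat \<Rightarrow> (nat \<Rightarrow> 'a set) \<Rightarrow> (nat \<Rightarrow> nat) \<Rightarrow> (nat \<Rightarrow> 'a set) \<Rightarrow> bool" where
  "is_block m X k B \<longleftrightarrow> (\<forall>i<m. B i \<subseteq> X i \<and> card (B i) = k i)"

definition admissible2 :: "nat \<Rightarrow> (nat \<Rightarrow> 'a set) \<Rightarrow> (nat \<Rightarrow> nat) \<Rightarrow> (nat \<Rightarrow> 'a set) \<Rightarrow> bool" where
  "admissible2 m X k T \<longleftrightarrow> (\<forall>i<m. T i \<subseteq> X i \<and> card (T i) \<le> k i) \<and> (\<Sum>i<m. card (T i)) = 2"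

definition contained_in :: "nat \<Rightarrow> (nat \<Rightarrow> 'a set) \<Rightarrow> (nat \<Rightarrow> 'a set) \<Rightarrow> bool" where
  "contained_in m T B \<longleftrightarrow> (\<forall>i<m. T i \<subseteq> B i)"

text \<open>A GC(v,k,2): a finite family of blocks (a list, so repetitions are allowed) covering
  every admissible tuple.\<close>
definition is_GC2 :: "nat \<Rightarrow> (nat \<Rightarrow> 'a set) \<Rightarrow> (nat \<Rightarrow> nat) \<Rightarrow> (nat \<Rightarrow> 'a set) list \<Rightarrow> bool" where
  "is_GC2 m X k F \<longleftrightarrow> (\<forall>B\<in>set F. is_block m X k B) \<and>
     (\<forall>T. admissible2 m X k T \<longrightarrow> (\<exists>B\<in>set F. contained_in m T B))"

definition C2 :: "nat \<Rightarrow> (nat \<Rightarrow> 'a set) \<Rightarrow> (nat \<Rightarrow> nat) \<Rightarrow> nat" where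
  "C2 m X k = (LEAST n. \<exists>F. is_GC2 m X k F \<and> length F = n)"

end

theory Submission
  imports Defs "HOL-Library.FuncSet"
begin

text \<open>Every 2-subset of the point set that does not lie inside a part with \<open>k i = 1\<close> splits
  over the parts into an admissible tuple, so it lies inside some block of any GC, while a block
  contains exactly \<open>(\<Sum>i. k i) choose 2\<close> such pairs. Double counting gives the bound; the
  second form of the bound comes from \<open>(\<Sum>i. v i) choose 2 = \<Sum>i. (v i choose 2) + \<Sum>i<j. v i * v j\<close>.\<close>

lemma choose_two_add: "(a + b) choose 2 = (a choose 2) + (b choose 2) + a * (b::nat)"
proof (induction b)
  case 0
  then show ?case by simp
next
  case (Suc b)
  have "(a + Suc b) choose 2 = (a + b) + ((a + b) choose 2)"
    by (metis Suc_1 add_Suc_right binomial_Suc_Suc choose_one)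
  moreover have "Suc b choose 2 = b + (b choose 2)"
    by (metis Suc_1 binomial_Suc_Suc choose_one)
  ultimately show ?case
    using Suc by (simp add: algebra_simps)
qed

lemma choose_two_sum:
  fixes m :: nat and v :: "nat \<Rightarrow> nat"
  shows "(\<Sum>i<m. v i) choose 2 = (\<Sum>i<m. v i choose 2) + (\<Sum>i<m. \<Sum>j\<in>{i<..<m}. v i * v j)"
proof (induction m)
  case 0
  then show ?case by simp
next
  case (Suc m)
  have "{i<..<Suc m} = insert m {i<..<m}" if "i < m" for i
    using that by auto
  then have "(\<Sum>i<Suc m. \<Sum>j\<in>{i<..<Suc m}. v i * v j) = (\<Sum>i<m. v i * v m + (\<Sum>j\<in>{i<..<m}. v i * v j))"
    by simp
  also have "\<dots> = (\<Sum>i<m. v i) * v m + (\<Sum>i<m. \<Sum>j\<in>{i<..<m}. v i * v j)"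
    by (simp add: sum.distrib sum_distrib_right)
  finally show ?case
    using Suc by (simp add: choose_two_add)
qed

lemma GC2_exists:
  assumes "\<And>i. i < m \<Longrightarrow> finite (X i)" and "\<And>i. i < m \<Longrightarrow> k i \<le> card (X i)"
  shows "\<exists>F. is_GC2 m X k F"
proof -
  define S where "S = {B \<in> PiE {..<m} (\<lambda>i. Pow (X i)). is_block m X k B}"
  have "finite (PiE {..<m} (\<lambda>i. Pow (X i)))"
    using assms(1) by (intro finite_PiE) auto
  then have "finite S"
    unfolding S_def by simp
  then obtain F where F: "set F = S"
    using finite_list by blast
  have "\<exists>B\<in>S. contained_in m T B" if adm: "admissible2 m X k T" for T
  proof -
    have "\<exists>C. T i \<subseteq> C \<and> C \<subseteq> X i \<and> card C = k i" if "i < m" for i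
    proof (rule exists_subset_between)
      show "card (T i) \<le> k i" "T i \<subseteq> X i"
        using adm that by (auto simp: admissible2_def)
    qed (use that assms in auto)
    then obtain G where G: "\<And>i. i < m \<Longrightarrow> T i \<subseteq> G i \<and> G i \<subseteq> X i \<and> card (G i) = k i"
      by metis
    define B where "B = (\<lambda>i. if i < m then G i else undefined)"
    have "B \<in> S" "contained_in m T B"
      using G by (auto simp: S_def B_def is_block_def contained_in_def PiE_def extensional_def)
    then show ?thesis by blast
  qed
  then have "is_GC2 m X k F"
    using F by (auto simp: is_GC2_def S_def)
  then show ?thesis ..
qed

lemma C2_attained:
  assumes "\<exists>F. is_GC2 m X k F"
  obtains F where "is_GC2 m X k F" and "length F = C2 m X k"
proof -
  have "\<exists>n F. is_GC2 m X k F \<and> length F = n"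
    using assms by blast
  from LeastI_ex[OF this] show ?thesis
    using that unfolding C2_def by blast
qed

definition pairs :: "'a set \<Rightarrow> 'a set set" where
  "pairs S = {p. p \<subseteq> S \<and> card p = 2}"

lemma card_pairs: "finite S \<Longrightarrow> card (pairs S) = card S choose 2"
  unfolding pairs_def by (rule n_subsets)

lemma finite_pairs: "finite S \<Longrightarrow> finite (pairs S)"
  unfolding pairs_def by simp

lemma card_UN_pairs_disjoint:
  assumes "finite I" and "\<And>i. i \<in> I \<Longrightarrow> finite (X i)"
    and "\<And>i j. i \<in> I \<Longrightarrow> j \<in> I \<Longrightarrow> i \<noteq> j \<Longrightarrow> X i \<inter> X j = {}"
  shows "card (\<Union>i\<in>I. pairs (X i)) = (\<Sum>i\<in>I. card (X i) choose 2)"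
proof -
  have "pairs (X i) \<inter> pairs (X j) = {}" if "i \<in> I" "j \<in> I" "i \<noteq> j" for i j
  proof -
    have False if "p \<in> pairs (X i)" "p \<in> pairs (X j)" for p
    proof -
      have "p \<subseteq> X i \<inter> X j" "card p = 2"
        using that by (auto simp: pairs_def)
      then show False
        using assms(3)[OF \<open>i \<in> I\<close> \<open>j \<in> I\<close> \<open>i \<noteq> j\<close>] by simp
    qed
    then show ?thesis
      by blast
  qed
  then have "card (\<Union>i\<in>I. pairs (X i)) = (\<Sum>i\<in>I. card (pairs (X i)))"
    using assms(1,2) by (intro card_UN_disjoint) (auto simp: finite_pairs)
  also have "\<dots> = (\<Sum>i\<in>I. card (X i) choose 2)"
    using assms(2) by (intro sum.cong) (simp_all add: card_pairs)
  finally show ?thesis .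
qed

lemma is_block_finite:
  assumes "is_block m X k B" and "0 < k i" and "i < m"
  shows "finite (B i)"
  using assms unfolding is_block_def by (metis card_ge_0_finite)

lemma card_block_pairs:
  assumes "is_block m X k B" and "\<And>i. i < m \<Longrightarrow> 0 < k i"
    and "\<And>i j. i < m \<Longrightarrow> j < m \<Longrightarrow> i \<noteq> j \<Longrightarrow> X i \<inter> X j = {}"
  shows "card (pairs (\<Union>i<m. B i)) = (\<Sum>i<m. k i) choose 2"
proof -
  have fin: "finite (B i)" if "i < m" for i
    using assms(1) assms(2)[OF that] that by (rule is_block_finite)
  have "B i \<inter> B j = {}" if "i < m" "j < m" "i \<noteq> j" for i j
    using assms(1) assms(3)[OF that] that unfolding is_block_def by blast
  then have "card (\<Union>i<m. B i) = (\<Sum>i<m. card (B i))"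
    using fin by (intro card_UN_disjoint) auto
  also have "\<dots> = (\<Sum>i<m. k i)"
    using assms(1) by (intro sum.cong) (simp_all add: is_block_def)
  finally show ?thesis
    using fin by (simp add: card_pairs)
qed

lemma admissible2_traces:
  assumes disj: "\<And>i j. i < m \<Longrightarrow> j < m \<Longrightarrow> i \<noteq> j \<Longrightarrow> X i \<inter> X j = {}"
    and kpos: "\<And>i. i < m \<Longrightarrow> 0 < k i"
    and p: "p \<in> pairs (\<Union>i<m. X i)" and short: "\<And>i. i < m \<Longrightarrow> k i = 1 \<Longrightarrow> \<not> p \<subseteq> X i"
  shows "admissible2 m X k (\<lambda>i. p \<inter> X i)"
proof -
  have cp: "card p = 2" and pU: "p \<subseteq> (\<Union>i<m. X i)"
    using p by (auto simp: pairs_def)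
  have finp: "finite p"
    using cp card.infinite by fastforce
  have "card p = card (\<Union>i<m. p \<inter> X i)"
    using pU by (metis Int_UN_distrib inf.absorb1)
  also have "\<dots> = (\<Sum>i<m. card (p \<inter> X i))"
    using finp disj by (intro card_UN_disjoint) auto
  finally have sum: "(\<Sum>i<m. card (p \<inter> X i)) = 2"
    using cp by simp
  have "card (p \<inter> X i) \<le> k i" if i: "i < m" for i
  proof (cases "p \<subseteq> X i")
    case True
    then have "k i \<noteq> 1"
      using short[OF i] by blast
    then show ?thesis
      using True kpos[OF i] cp by (simp add: Int_absorb2)
  next
    case False
    then have "card (p \<inter> X i) < 2"
      using finp cp by (metis Int_lower1 card_subset_eq inf.absorb_iff1 le_neq_implies_less card_mono)
    then show ?thesis
      using kpos[OF i] by simp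
  qed
  then show ?thesis
    using sum by (simp add: admissible2_def)
qed

lemma GC2_covers_pairs:
  assumes GC: "is_GC2 m X k F"
    and disj: "\<And>i j. i < m \<Longrightarrow> j < m \<Longrightarrow> i \<noteq> j \<Longrightarrow> X i \<inter> X j = {}"
    and kpos: "\<And>i. i < m \<Longrightarrow> 0 < k i"
  shows "pairs (\<Union>i<m. X i) - (\<Union>i\<in>{i. i < m \<and> k i = 1}. pairs (X i))
           \<subseteq> (\<Union>B\<in>set F. pairs (\<Union>i<m. B i))"
proof
  fix p
  assume p: "p \<in> pairs (\<Union>i<m. X i) - (\<Union>i\<in>{i. i < m \<and> k i = 1}. pairs (X i))"
  then have "admissible2 m X k (\<lambda>i. p \<inter> X i)"
    using disj kpos by (intro admissible2_traces) (auto simp: pairs_def)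
  then obtain B where B: "B \<in> set F" "contained_in m (\<lambda>i. p \<inter> X i) B"
    using GC unfolding is_GC2_def by blast
  have "p \<subseteq> (\<Union>i<m. B i)"
  proof
    fix x
    assume "x \<in> p"
    then obtain j where "j < m" "x \<in> X j"
      using p by (auto simp: pairs_def)
    then show "x \<in> (\<Union>i<m. B i)"
      using B(2) \<open>x \<in> p\<close> by (auto simp: contained_in_def)
  qed
  then show "p \<in> (\<Union>B\<in>set F. pairs (\<Union>i<m. B i))"
    using p B(1) by (auto simp: pairs_def)
qed

lemma card_UN_set_le:
  assumes "\<And>x. x \<in> set xs \<Longrightarrow> card (A x) \<le> K"
  shows "card (\<Union>x\<in>set xs. A x) \<le> length xs * K"
proof -
  have "card (\<Union>x\<in>set xs. A x) \<le> (\<Sum>x\<in>set xs. card (A x))"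
    by (simp add: card_UN_le)
  also have "\<dots> \<le> card (set xs) * K"
    using sum_bounded_above[of "set xs" "\<lambda>x. card (A x)" K] assms by simp
  also have "\<dots> \<le> length xs * K"
    by (simp add: card_length)
  finally show ?thesis .
qed

lemma GC2_length_lower_bound:
  assumes fin: "\<And>i. i < m \<Longrightarrow> finite (X i)"
    and disj: "\<And>i j. i < m \<Longrightarrow> j < m \<Longrightarrow> i \<noteq> j \<Longrightarrow> X i \<inter> X j = {}"
    and kpos: "\<And>i. i < m \<Longrightarrow> 0 < k i"
    and GC: "is_GC2 m X k F"
  shows "real ((\<Sum>i<m. card (X i)) choose 2) - (\<Sum>i\<in>{i. i < m \<and> k i = 1}. real (card (X i) choose 2))
           \<le> real (length F) * real ((\<Sum>i<m. k i) choose 2)"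
proof -
  define Q where "Q = pairs (\<Union>i<m. X i)"
  define R where "R = (\<Union>i\<in>{i. i < m \<and> k i = 1}. pairs (X i))"
  have finQ: "finite Q"
    using fin by (simp add: Q_def finite_pairs)
  have RQ: "R \<subseteq> Q"
    by (auto simp: Q_def R_def pairs_def)
  have "card (\<Union>i<m. X i) = (\<Sum>i<m. card (X i))"
    using fin disj by (intro card_UN_disjoint) auto
  then have cardQ: "card Q = (\<Sum>i<m. card (X i)) choose 2"
    using fin by (simp add: Q_def card_pairs)
  have cardR: "card R = (\<Sum>i\<in>{i. i < m \<and> k i = 1}. card (X i) choose 2)"
    unfolding R_def using fin disj by (intro card_UN_pairs_disjoint) auto
  have blocks: "is_block m X k B" if "B \<in> set F" for B
    using GC that by (simp add: is_GC2_def)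
  have "finite (B i)" if "B \<in> set F" "i < m" for B i
    using blocks[OF that(1)] kpos[OF that(2)] that(2) by (rule is_block_finite)
  then have "finite (\<Union>B\<in>set F. pairs (\<Union>i<m. B i))"
    by (simp add: finite_pairs)
  then have "card (Q - R) \<le> card (\<Union>B\<in>set F. pairs (\<Union>i<m. B i))"
    using GC2_covers_pairs[OF GC disj kpos] unfolding Q_def R_def by (rule card_mono)
  also have "\<dots> \<le> length F * ((\<Sum>i<m. k i) choose 2)"
    using card_block_pairs[OF blocks kpos disj] by (intro card_UN_set_le) simp
  finally have "real (card (Q - R)) \<le> real (length F) * real ((\<Sum>i<m. k i) choose 2)"
    by (simp only: of_nat_mult[symmetric] of_nat_le_iff)
  moreover have "card (Q - R) = card Q - card R" and "card R \<le> card Q"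
    using RQ finQ by (simp_all add: card_Diff_subset card_mono finite_subset)
  ultimately show ?thesis
    by (simp add: cardQ cardR of_nat_diff)
qed

lemma choose_two_sum_minus_parts:
  fixes m :: nat and v :: "nat \<Rightarrow> nat"
  shows "real ((\<Sum>i<m. v i) choose 2) - (\<Sum>i\<in>{i. i < m \<and> P i}. real (v i choose 2))
           = (\<Sum>i\<in>{i. i < m \<and> \<not> P i}. real (v i choose 2))
             + (\<Sum>i<m. \<Sum>j\<in>{i<..<m}. real (v i) * real (v j))"
proof -
  have "{..<m} \<inter> {i. P i} = {i. i < m \<and> P i}" and "{..<m} - {i. P i} = {i. i < m \<and> \<not> P i}"
    by auto
  then have "(\<Sum>i<m. real (v i choose 2))
               = (\<Sum>i\<in>{i. i < m \<and> P i}. real (v i choose 2)) + (\<Sum>i\<in>{i. i < m \<and> \<not> P i}. real (v i choose 2))"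
    using sum.Int_Diff[of "{..<m}" "\<lambda>i. real (v i choose 2)" "{i. P i}"] by simp
  moreover have "real ((\<Sum>i<m. v i) choose 2)
                   = (\<Sum>i<m. real (v i choose 2)) + (\<Sum>i<m. \<Sum>j\<in>{i<..<m}. real (v i) * real (v j))"
    by (simp add: choose_two_sum)
  ultimately show ?thesis
    by simp
qed

lemma of_int_ceiling_divide_le:
  fixes a b :: real
  assumes "0 < b" and "a \<le> real n * b"
  shows "of_int \<lceil>a / b\<rceil> \<le> real n"
proof -
  have "\<lceil>a / b\<rceil> \<le> int n"
    using assms by (simp add: ceiling_le_iff divide_le_eq)
  then show ?thesis
    by (metis of_int_le_iff of_int_of_nat_eq)
qed

theorem proposition3p7:
  fixes m :: nat and X :: "nat \<Rightarrow> 'a set" and v k :: "nat \<Rightarrow> nat"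
  assumes fin: "\<And>i. i < m \<Longrightarrow> finite (X i)"
    and cardX: "\<And>i. i < m \<Longrightarrow> card (X i) = v i"
    and disj: "\<And>i j. i < m \<Longrightarrow> j < m \<Longrightarrow> i \<noteq> j \<Longrightarrow> X i \<inter> X j = {}"
    and kpos: "\<And>i. i < m \<Longrightarrow> 0 < k i"
    and kle: "\<And>i. i < m \<Longrightarrow> k i \<le> v i"
    and k2: "(\<Sum>i<m. k i) \<ge> 2"
  shows "of_int \<lceil>(real ((\<Sum>i<m. v i) choose 2) - (\<Sum>i\<in>{i. i < m \<and> k i = 1}. real (v i choose 2)))
                 / real ((\<Sum>i<m. k i) choose 2)\<rceil> \<le> real (C2 m X k)
       \<and> \<lceil>(real ((\<Sum>i<m. v i) choose 2) - (\<Sum>i\<in>{i. i < m \<and> k i = 1}. real (v i choose 2)))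
                 / real ((\<Sum>i<m. k i) choose 2)\<rceil>
         = \<lceil>((\<Sum>i\<in>{i. i < m \<and> k i \<noteq> 1}. real (v i choose 2))
               + (\<Sum>i<m. \<Sum>j\<in>{i<..<m}. real (v i) * real (v j)))
                 / real ((\<Sum>i<m. k i) choose 2)\<rceil>"
proof -
  have "k i \<le> card (X i)" if "i < m" for i
    using cardX[OF that] kle[OF that] by simp
  with fin have "\<exists>F. is_GC2 m X k F"
    by (rule GC2_exists)
  then obtain F where GC: "is_GC2 m X k F" and lenF: "length F = C2 m X k"
    by (rule C2_attained)
  have "(\<Sum>i<m. card (X i)) = (\<Sum>i<m. v i)"
    and "(\<Sum>i\<in>{i. i < m \<and> k i = 1}. real (card (X i) choose 2))
           = (\<Sum>i\<in>{i. i < m \<and> k i = 1}. real (v i choose 2))"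
    by (rule sum.cong; simp add: cardX)+
  then have bound: "real ((\<Sum>i<m. v i) choose 2) - (\<Sum>i\<in>{i. i < m \<and> k i = 1}. real (v i choose 2))
                      \<le> real (C2 m X k) * real ((\<Sum>i<m. k i) choose 2)"
    using GC2_length_lower_bound[OF fin disj kpos GC] lenF by simp
  show ?thesis
    unfolding choose_two_sum_minus_parts[symmetric]
    using of_int_ceiling_divide_le[OF _ bound] k2 by simp
qed

end
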